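(* Let $n\ge 2$ and let $\mathcal{F}$ be a maximal coclique of $\Gamma_{2n}$. Any two $\mathcal{F}$-red $(n-1)$-spaces meet (have nonempty intersection). Any two $\mathcal{F}$-red $n$-spaces are not in general position, i.e. they do not meet in just a point.
   Context: $\mathrm{PG}(2n,q)$ is the projective space of projective dimension $2n$ over the field of order $q$; an $i$-space is a subspace of projective dimension $i$. An $(n-1,n)$-flag is a pair $(A,B)$ with $A$ an $(n-1)$-space, $B$ an $n$-space and $A\subseteq B$. Two such flags $(A_1,B_1),(A_2,B_2)$ are opposite if $A_1\cap B_2=A_2\cap B_1=\emptyset$. $\Gamma_{2n}$ is the graph whose vertices are the $(n-1,n)$-flags, adjacent when opposite; a maximal coclique is an inclusion-maximal set of pairwise non-opposite flags. An $n$-space or $(n-1)$-space is $\mathcal{F}$-red if it occurs in exactly $\frac{q^{n+1}-1}{q-1}$ flags of $\mathcal{F}$. Two $n$-spaces of $\mathrm{PG}(2n,q)$ are in general position if they span the whole space, equivalently meet in exactly a point. *)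

theory Defs
  imports "HOL-Analysis.Analysis"
begin

text \<open>PG(2n,q) is modelled by the vector space 'a^'d over a finite field 'a
  with CARD('d) = 2n+1; a projective i-space is a vector subspace of dimension i+1.
  The empty projective subspace corresponds to the zero subspace {0}.\<close>

definition proj_space :: "nat \<Rightarrow> ('a::field ^ 'd) set \<Rightarrow> bool" where
  "proj_space i U \<longleftrightarrow> vec.subspace U \<and> vec.dim U = i + 1"

definition flags :: "nat \<Rightarrow> (('a::field ^ 'd) set \<times> ('a ^ 'd) set) set" where
  "flags n = {(A, B). proj_space (n - 1) A \<and> proj_space n B \<and> A \<subseteq> B}"

definition opposite :: "('a::field ^ 'd) set \<times> ('a ^ 'd) set \<Rightarrow> ('a ^ 'd) set \<times> ('a ^ 'd) set \<Rightarrow> bool" where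
  "opposite f g \<longleftrightarrow> fst f \<inter> snd g = {0} \<and> fst g \<inter> snd f = {0}"

definition coclique :: "nat \<Rightarrow> (('a::field ^ 'd) set \<times> ('a ^ 'd) set) set \<Rightarrow> bool" where
  "coclique n F \<longleftrightarrow> F \<subseteq> flags n \<and> (\<forall>f\<in>F. \<forall>g\<in>F. \<not> opposite f g)"

definition maximal_coclique :: "nat \<Rightarrow> (('a::field ^ 'd) set \<times> ('a ^ 'd) set) set \<Rightarrow> bool" where
  "maximal_coclique n F \<longleftrightarrow> coclique n F \<and>
     (\<forall>G. coclique n G \<and> F \<subseteq> G \<longrightarrow> G = F)"

definition red_number :: "nat \<Rightarrow> nat \<Rightarrow> nat" where
  "red_number q n = (q ^ (n + 1) - 1) div (q - 1)"

definition red_nspace :: "nat \<Rightarrow> (('a::{field,finite} ^ 'd) set \<times> ('a ^ 'd) set) set \<Rightarrow> ('a ^ 'd) set \<Rightarrow> bool" where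
  "red_nspace n F B \<longleftrightarrow> proj_space n B \<and>
     card {f \<in> F. snd f = B} = red_number CARD('a) n"

definition red_n1space :: "nat \<Rightarrow> (('a::{field,finite} ^ 'd) set \<times> ('a ^ 'd) set) set \<Rightarrow> ('a ^ 'd) set \<Rightarrow> bool" where
  "red_n1space n F A \<longleftrightarrow> proj_space (n - 1) A \<and>
     card {f \<in> F. fst f = A} = red_number CARD('a) n"

end

theory Submission
  imports Defs
begin

(*
  A red (n-1)-space A lies in exactly as many flags of F as there are n-spaces through A, namely
  (q^(n+1)-1)/(q-1); hence every flag (A,B) with B \<supseteq> A belongs to F.  Dually, the number of
  hyperplanes of an n-space equals the number of its points, so every flag (A,B) of a red n-space B
  belongs to F.  Now if two red (n-1)-spaces A1, A2 were disjoint, they would span at most a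
  (2n-1)-space of PG(2n,q), and joining both with a point v outside it gives n-spaces B1, B2 such
  that the flags (A1,B1) and (A2,B2) are opposite.  If two red n-spaces B1, B2 met in a single
  point p, hyperplanes A1 of B1 and A2 of B2 missing p would again give opposite flags (A1,B1)
  and (A2,B2).  Both contradict F being a coclique.
*)

lemma two_le_card_field: "2 \<le> CARD('a::{field,finite})"
proof -
  have "card {0::'a, 1} \<le> CARD('a)" by (rule card_mono) simp_all
  then show ?thesis by simp
qed

lemma card_mult_le_card_if_fibres_ge:
  assumes "finite T" and "\<And>s. s \<in> S \<Longrightarrow> k \<le> card {t \<in> T. g t = s}"
  shows "card S * k \<le> card T"
proof (cases "finite S")
  case True
  have "card S * k \<le> (\<Sum>s\<in>S. card {t \<in> T. g t = s})"
    using sum_bounded_below[of S k] assms(2) by simp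
  also have "\<dots> = card (\<Union>s\<in>S. {t \<in> T. g t = s})"
    by (rule card_UN_disjoint[symmetric]) (use True assms(1) in auto)
  also have "\<dots> \<le> card T"
    by (rule card_mono) (use assms(1) in auto)
  finally show ?thesis .
qed simp

lemma card_subspace:
  fixes U :: "('a::{field,finite} ^ 'd) set"
  assumes "vec.subspace U"
  shows "card U = CARD('a) ^ vec.dim U"
proof -
  obtain Bs where Bs: "Bs \<subseteq> U" "vec.independent Bs" "U \<subseteq> vec.span Bs" "card Bs = vec.dim U"
    using vec.basis_exists by blast
  have fin: "finite Bs" by simp
  have span: "vec.span Bs = U"
    using Bs(1,3) assms by (rule vec.span_subspace)
  let ?comb = "\<lambda>u. \<Sum>v\<in>Bs. u v *s v"
  have "bij_betw ?comb (Bs \<rightarrow>\<^sub>E UNIV) U"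
  proof (rule bij_betw_imageI)
    show "inj_on ?comb (Bs \<rightarrow>\<^sub>E UNIV)"
    proof (rule inj_onI)
      fix u w
      assume u: "u \<in> Bs \<rightarrow>\<^sub>E UNIV" and w: "w \<in> Bs \<rightarrow>\<^sub>E UNIV" and eq: "?comb u = ?comb w"
      have comb0: "(\<Sum>v\<in>Bs. (u v - w v) *s v) = 0"
        using eq by (simp add: vec.scale_left_diff_distrib sum_subtractf)
      have "u v = w v" if "v \<in> Bs" for v
      proof (rule ccontr)
        assume "u v \<noteq> w v"
        then have "vec.dependent Bs"
          unfolding vec.dependent_finite[OF fin] using comb0 that
          by (intro exI[of _ "\<lambda>v. u v - w v"]) auto
        then show False using Bs(2) by contradiction
      qed
      then show "u = w"
        using u w PiE_ext by metis
    qed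
    show "?comb ` (Bs \<rightarrow>\<^sub>E UNIV) = U"
    proof
      show "?comb ` (Bs \<rightarrow>\<^sub>E UNIV) \<subseteq> U"
        unfolding span[symmetric] vec.span_finite[OF fin] by blast
      show "U \<subseteq> ?comb ` (Bs \<rightarrow>\<^sub>E UNIV)"
      proof
        fix x assume "x \<in> U"
        then obtain u where x: "x = ?comb u"
          unfolding span[symmetric] vec.span_finite[OF fin] by blast
        have "x = ?comb (restrict u Bs)"
          unfolding x by (rule sum.cong) auto
        moreover have "restrict u Bs \<in> Bs \<rightarrow>\<^sub>E UNIV" by simp
        ultimately show "x \<in> ?comb ` (Bs \<rightarrow>\<^sub>E UNIV)" by blast
      qed
    qed
  qed
  then have "card U = card (Bs \<rightarrow>\<^sub>E (UNIV :: 'a set))"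
    by (rule bij_betw_same_card[symmetric])
  also have "\<dots> = CARD('a) ^ vec.dim U"
    by (simp add: card_PiE fin Bs(4))
  finally show ?thesis .
qed

lemma card_subspaces_covering_le:
  fixes A V :: "('a::{field,finite} ^ 'd) set"
  assumes A: "vec.subspace A" and V: "vec.subspace V" and "A \<subseteq> V"
  shows "card {B. vec.subspace B \<and> vec.dim B = vec.dim A + 1 \<and> A \<subseteq> B \<and> B \<subseteq> V} * (CARD('a) - 1)
           \<le> CARD('a) ^ (vec.dim V - vec.dim A) - 1"
proof -
  let ?q = "CARD('a)" and ?k = "vec.dim A"
  let ?S = "{B. vec.subspace B \<and> vec.dim B = ?k + 1 \<and> A \<subseteq> B \<and> B \<subseteq> V}"
  have spanA: "vec.span A = A"
    using A by (rule vec.span_eq_iff[THEN iffD2])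
  \<comment> \<open>Every such B is spanned by A and any of its q^k(q-1) vectors outside A.\<close>
  have "card ?S * (?q ^ ?k * (?q - 1)) \<le> card (V - A)"
  proof (rule card_mult_le_card_if_fibres_ge[where g = "\<lambda>y. vec.span (insert y A)"])
    fix B assume "B \<in> ?S"
    then have B: "vec.subspace B" "vec.dim B = ?k + 1" "A \<subseteq> B" "B \<subseteq> V" by auto
    have "B - A \<subseteq> {y \<in> V - A. vec.span (insert y A) = B}"
    proof
      fix y assume y: "y \<in> B - A"
      then have "vec.dim (insert y A) = vec.dim B"
        using B(2) vec.dim_insert[of y A] unfolding spanA by simp
      then have "vec.span (insert y A) = vec.span B"
        using y B(3) by (intro vec.dim_eq_span) auto
      then show "y \<in> {y \<in> V - A. vec.span (insert y A) = B}"
        using y B(1,4) vec.span_eq_iff by auto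
    qed
    moreover have "card (B - A) = ?q ^ ?k * ?q - ?q ^ ?k"
      using card_Diff_subset[OF _ B(3)] card_subspace[OF A] card_subspace[OF B(1)] B(2)
      by (simp add: mult.commute)
    then have "card (B - A) = ?q ^ ?k * (?q - 1)"
      by (simp only: diff_mult_distrib2 mult_1_right)
    ultimately show "?q ^ ?k * (?q - 1) \<le> card {y \<in> V - A. vec.span (insert y A) = B}"
      using card_mono[of "{y \<in> V - A. vec.span (insert y A) = B}" "B - A"] by simp
  qed simp
  also have "card (V - A) = ?q ^ ?k * (?q ^ (vec.dim V - ?k) - 1)"
  proof -
    have "?k \<le> vec.dim V" using \<open>A \<subseteq> V\<close> by (rule vec.dim_subset)
    then have "?q ^ vec.dim V = ?q ^ ?k * ?q ^ (vec.dim V - ?k)"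
      by (simp flip: power_add)
    then show ?thesis
      using card_Diff_subset[OF _ \<open>A \<subseteq> V\<close>] card_subspace[OF A] card_subspace[OF V]
      by (simp add: diff_mult_distrib2 mult.commute)
  qed
  finally show ?thesis by simp
qed

lemma hyperplane_avoiding:
  fixes B :: "('a::field ^ 'd) set"
  assumes "vec.subspace B" "p \<in> B" "p \<noteq> 0"
  obtains H where "vec.subspace H" "vec.dim H = vec.dim B - 1" "H \<subseteq> B" "p \<notin> H"
proof -
  have "{p} \<subseteq> B" "vec.independent {p}"
    using assms(2,3) by simp_all
  then obtain Bs where Bs: "{p} \<subseteq> Bs" "Bs \<subseteq> B" "vec.independent Bs" "B \<subseteq> vec.span Bs"
    by (rule vec.maximal_independent_subset_extend)
  let ?H = "vec.span (Bs - {p})"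
  have "vec.dim ?H = card (Bs - {p})"
    using vec.independent_mono[OF Bs(3) Diff_subset] by (rule vec.dim_span_eq_card_independent)
  also have "\<dots> = card Bs - 1"
    using Bs(1) by (simp add: card_Diff_singleton)
  also have "\<dots> = vec.dim B - 1"
    using vec.basis_card_eq_dim[OF Bs(2,4,3)] by (rule arg_cong)
  finally have "vec.dim ?H = vec.dim B - 1" .
  moreover have "?H \<subseteq> B"
    using Bs(2) assms(1) by (intro vec.span_minimal) auto
  moreover have "p \<notin> ?H"
    using Bs(1,3) unfolding vec.dependent_def by blast
  ultimately show ?thesis
    using that vec.subspace_span by blast
qed

lemma dim_inter_distinct_hyperplanes:
  fixes B H1 H2 :: "('a::field ^ 'd) set"
  assumes B: "vec.subspace B" "vec.dim B = Suc (Suc m)"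
    and H1: "vec.subspace H1" "vec.dim H1 = Suc m" "H1 \<subseteq> B"
    and H2: "vec.subspace H2" "vec.dim H2 = Suc m" "H2 \<subseteq> B"
    and "H1 \<noteq> H2"
  shows "vec.dim (H1 \<inter> H2) = m"
proof -
  let ?sum = "{x + y |x y. x \<in> H1 \<and> y \<in> H2}"
  have sum: "vec.subspace ?sum"
    using H1(1) H2(1) by (rule vec.subspace_sums)
  have "?sum \<subseteq> B"
    using H1(3) H2(3) vec.subspace_add[OF B(1)] by blast
  then have "vec.dim ?sum \<le> Suc (Suc m)"
    unfolding B(2)[symmetric] by (rule vec.dim_subset)
  moreover have "\<not> vec.dim ?sum \<le> Suc m"
  proof
    assume small: "vec.dim ?sum \<le> Suc m"
    have "H1 \<subseteq> ?sum"
      using vec.subspace_0[OF H2(1)] by (metis (mono_tags, lifting) add.right_neutral mem_Collect_eq subsetI)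
    then have "H1 = ?sum"
      using H1(1,2) sum small by (intro vec.subspace_dim_equal) auto
    have "H2 \<subseteq> ?sum"
      using vec.subspace_0[OF H1(1)] by force
    then have "H2 = ?sum"
      using H2(1,2) sum small by (intro vec.subspace_dim_equal) auto
    with \<open>H1 = ?sum\<close> \<open>H1 \<noteq> H2\<close> show False
      by metis
  qed
  ultimately show ?thesis
    using vec.dim_sums_Int[OF H1(1) H2(1)] H1(2) H2(2) by simp
qed

lemma card_hyperplanes_le:
  fixes B :: "('a::{field,finite} ^ 'd) set"
  assumes "vec.subspace B" "vec.dim B = Suc m"
  shows "card {H. vec.subspace H \<and> vec.dim H = m \<and> H \<subseteq> B} * (CARD('a) - 1)
           \<le> CARD('a) ^ Suc m - 1"
  using assms
proof (induction m arbitrary: B)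
  case 0
  have "H = {0}" if "vec.subspace H" "vec.dim H = 0" for H :: "('a ^ 'd) set"
    using that vec.subspace_0[of H] by auto
  then have "{H. vec.subspace H \<and> vec.dim H = 0 \<and> H \<subseteq> B} \<subseteq> {{0}}"
    by blast
  then have "card {H. vec.subspace H \<and> vec.dim H = 0 \<and> H \<subseteq> B} \<le> 1"
    using card_mono[of "{{0}}"] by simp
  then show ?case by simp
next
  case (Suc m)
  let ?q = "CARD('a)"
  let ?S = "{H. vec.subspace H \<and> vec.dim H = Suc m \<and> H \<subseteq> B}"
  have "\<not> B \<subseteq> {0}"
    using Suc.prems(2) vec.dim_eq_0 by (metis nat.simps(3))
  then obtain p where "p \<in> B" "p \<noteq> 0" by blast
  then obtain H0 where H0: "vec.subspace H0" "vec.dim H0 = Suc m" "H0 \<subseteq> B"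
    using hyperplane_avoiding[OF Suc.prems(1)] Suc.prems(2) by (metis diff_Suc_1)
  \<comment> \<open>Each hyperplane H \<noteq> H0 of B is one of the at most q hyperplanes \<noteq> H0 through the
    hyperplane H \<inter> H0 of H0.\<close>
  let ?K = "{K. vec.subspace K \<and> vec.dim K = m \<and> K \<subseteq> H0}"
  let ?over = "\<lambda>K. {H. vec.subspace H \<and> vec.dim H = vec.dim K + 1 \<and> K \<subseteq> H \<and> H \<subseteq> B}"
  have q: "2 \<le> ?q" by (rule two_le_card_field)
  have over: "card (?over K - {H0}) \<le> ?q" if "K \<in> ?K" for K
  proof -
    from that H0 have K: "vec.subspace K" "vec.dim K = m" "K \<subseteq> B" by auto
    have "card (?over K) * (?q - 1) \<le> ?q ^ 2 - 1"
      using card_subspaces_covering_le[OF K(1) Suc.prems(1) K(3)] K(2) Suc.prems(2)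
      by (simp add: numeral_2_eq_2)
    also have "\<dots> = (?q + 1) * (?q - 1)"
      by (simp add: power2_eq_square algebra_simps)
    finally have "card (?over K) * (?q - 1) \<le> (?q + 1) * (?q - 1)" .
    then have "card (?over K) \<le> ?q + 1"
      using q by (subst (asm) mult_le_cancel2) simp
    moreover have "H0 \<in> ?over K"
      using H0 K that by auto
    ultimately show ?thesis
      by (simp add: card_Diff_singleton)
  qed
  have cover: "?S - {H0} \<subseteq> (\<Union>K\<in>?K. ?over K - {H0})"
  proof
    fix H assume "H \<in> ?S - {H0}"
    then have H: "vec.subspace H" "vec.dim H = Suc m" "H \<subseteq> B" "H \<noteq> H0" by auto
    have "H \<inter> H0 \<in> ?K"
      using dim_inter_distinct_hyperplanes[OF Suc.prems H(1-3) H0 H(4)] vec.subspace_inter[OF H(1) H0(1)]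
      by auto
    moreover have "H \<in> ?over (H \<inter> H0) - {H0}"
      using H \<open>H \<inter> H0 \<in> ?K\<close> by auto
    ultimately show "H \<in> (\<Union>K\<in>?K. ?over K - {H0})" by blast
  qed
  have "card (?S - {H0}) \<le> card (\<Union>K\<in>?K. ?over K - {H0})"
    by (rule card_mono[OF _ cover]) simp
  also have "\<dots> \<le> (\<Sum>K\<in>?K. card (?over K - {H0}))"
    by (rule card_UN_le) simp
  also have "\<dots> \<le> card ?K * ?q"
    using sum_bounded_above[of ?K, OF over] by simp
  finally have "card (?S - {H0}) \<le> card ?K * ?q" .
  moreover have "card ?S = card (?S - {H0}) + 1"
    using H0 card.remove[of ?S H0] by simp
  ultimately have "card ?S \<le> card ?K * ?q + 1"
    by simp
  then have "card ?S * (?q - 1) \<le> (card ?K * ?q + 1) * (?q - 1)"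
    by (rule mult_le_mono1)
  also have "\<dots> = ?q * (card ?K * (?q - 1)) + (?q - 1)"
    by (simp add: algebra_simps)
  also have "\<dots> \<le> ?q * (?q ^ Suc m - 1) + (?q - 1)"
    using Suc.IH[OF H0(1,2)] by (intro add_le_mono1 mult_le_mono2)
  also have "\<dots> = ?q ^ Suc (Suc m) - 1"
  proof -
    have "?q \<le> ?q * ?q ^ Suc m" using q by simp
    then show ?thesis using q by (simp add: diff_mult_distrib2)
  qed
  finally show ?case .
qed

lemma le_red_number_if_mult_le:
  fixes c q n :: nat
  assumes "1 < q" "c * (q - 1) \<le> q ^ (n + 1) - 1"
  shows "c \<le> red_number q n"
  unfolding red_number_def using assms by (simp add: less_eq_div_iff_mult_less_eq)

lemma image_subset_if_card_le:
  assumes "finite X" and "{f \<in> F. P f} \<subseteq> g ` X" and "card X \<le> card {f \<in> F. P f}"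
  shows "g ` X \<subseteq> F"
proof -
  have "card (g ` X) \<le> card {f \<in> F. P f}"
    using card_image_le[OF assms(1)] assms(3) by (rule le_trans)
  then have "{f \<in> F. P f} = g ` X"
    using assms(1,2) by (intro card_seteq) simp_all
  then show ?thesis by blast
qed

lemma flag_in_if_red_n1space:
  fixes F :: "(('a::{field,finite} ^ 'd) set \<times> ('a ^ 'd) set) set"
  assumes "F \<subseteq> flags n" "CARD('d) = 2 * n + 1" "0 < n"
    and red: "red_n1space n F A" and "proj_space n B" "A \<subseteq> B"
  shows "(A, B) \<in> F"
proof -
  have A: "vec.subspace A" "vec.dim A = n"
    using red \<open>0 < n\<close> unfolding red_n1space_def proj_space_def by auto
  let ?over = "{B. vec.subspace B \<and> vec.dim B = vec.dim A + 1 \<and> A \<subseteq> B \<and> B \<subseteq> UNIV}"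
  have "card ?over * (CARD('a) - 1) \<le> CARD('a) ^ (n + 1) - 1"
    using card_subspaces_covering_le[OF A(1) vec.subspace_UNIV subset_UNIV] A(2) assms(2)
    by (simp add: card_cart_basis)
  then have "card ?over \<le> red_number CARD('a) n"
    using two_le_card_field[where 'a='a] by (intro le_red_number_if_mult_le) simp_all
  also have "\<dots> = card {f \<in> F. fst f = A}"
    using red unfolding red_n1space_def by simp
  finally have "card ?over \<le> card {f \<in> F. fst f = A}" .
  moreover have "{f \<in> F. fst f = A} \<subseteq> Pair A ` ?over"
  proof (rule subsetI, elim CollectE conjE)
    fix f assume "f \<in> F" "fst f = A"
    then obtain B' where f: "f = (A, B')" "(A, B') \<in> flags n"
      using assms(1) by (cases f) auto
    then have "B' \<in> ?over"
      using A unfolding flags_def proj_space_def by auto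
    then show "f \<in> Pair A ` ?over"
      unfolding f(1) by (rule imageI)
  qed
  ultimately have "Pair A ` ?over \<subseteq> F"
    by (intro image_subset_if_card_le) simp_all
  moreover have "B \<in> ?over"
    using assms(5,6) A unfolding proj_space_def by auto
  ultimately show ?thesis by blast
qed

lemma flag_in_if_red_nspace:
  fixes F :: "(('a::{field,finite} ^ 'd) set \<times> ('a ^ 'd) set) set"
  assumes "F \<subseteq> flags n" "0 < n"
    and red: "red_nspace n F B" and "proj_space (n - 1) A" "A \<subseteq> B"
  shows "(A, B) \<in> F"
proof -
  have B: "vec.subspace B" "vec.dim B = Suc n"
    using red unfolding red_nspace_def proj_space_def by auto
  let ?hyps = "{H. vec.subspace H \<and> vec.dim H = n \<and> H \<subseteq> B}"
  have "card ?hyps \<le> red_number CARD('a) n"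
    using card_hyperplanes_le[OF B] two_le_card_field[where 'a='a]
    by (intro le_red_number_if_mult_le) simp_all
  also have "\<dots> = card {f \<in> F. snd f = B}"
    using red unfolding red_nspace_def by simp
  finally have "card ?hyps \<le> card {f \<in> F. snd f = B}" .
  moreover have "{f \<in> F. snd f = B} \<subseteq> (\<lambda>H. (H, B)) ` ?hyps"
  proof (rule subsetI, elim CollectE conjE)
    fix f assume "f \<in> F" "snd f = B"
    then obtain A' where f: "f = (A', B)" "(A', B) \<in> flags n"
      using assms(1) by (cases f) auto
    then have "A' \<in> ?hyps"
      using \<open>0 < n\<close> unfolding flags_def proj_space_def by auto
    then show "f \<in> (\<lambda>H. (H, B)) ` ?hyps"
      unfolding f(1) by (rule imageI)
  qed
  ultimately have "(\<lambda>H. (H, B)) ` ?hyps \<subseteq> F"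
    by (intro image_subset_if_card_le) simp_all
  moreover have "A \<in> ?hyps"
    using assms(2,4,5) unfolding proj_space_def by auto
  ultimately show ?thesis by blast
qed

lemma inter_span_insert_eq_0:
  fixes A C :: "('a::field ^ 'd) set"
  assumes "vec.subspace A" "vec.subspace C" "A \<inter> C = {0}" "v \<notin> vec.span (A \<union> C)"
  shows "A \<inter> vec.span (insert v C) = {0}"
proof
  show "{0} \<subseteq> A \<inter> vec.span (insert v C)"
    using vec.subspace_0[OF assms(1)] vec.span_zero by blast
  show "A \<inter> vec.span (insert v C) \<subseteq> {0}"
  proof
    fix x assume x: "x \<in> A \<inter> vec.span (insert v C)"
    then obtain k where k: "x - k *s v \<in> C"
      unfolding vec.span_insert vec.span_eq_iff[THEN iffD2, OF assms(2)] by blast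
    have "k = 0"
    proof (rule ccontr)
      assume "k \<noteq> 0"
      have "x \<in> vec.span (A \<union> C)" "x - k *s v \<in> vec.span (A \<union> C)"
        using x k by (auto intro: vec.span_base)
      then have "x - (x - k *s v) \<in> vec.span (A \<union> C)"
        by (rule vec.span_diff)
      then have "k *s v \<in> vec.span (A \<union> C)"
        by simp
      then have "inverse k *s (k *s v) \<in> vec.span (A \<union> C)"
        by (rule vec.span_scale)
      with \<open>k \<noteq> 0\<close> assms(4) show False by simp
    qed
    then show "x \<in> {0}"
      using x k assms(3) by auto
  qed
qed

lemma extensions_with_trivial_cross_intersections:
  fixes A1 A2 :: "('a::field ^ 'd) set"
  assumes A1: "vec.subspace A1" and A2: "vec.subspace A2" and "A1 \<inter> A2 = {0}"
    and "vec.dim A1 + vec.dim A2 < CARD('d)"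
  obtains B1 B2 where
    "vec.subspace B1" "vec.dim B1 = vec.dim A1 + 1" "A1 \<subseteq> B1"
    "vec.subspace B2" "vec.dim B2 = vec.dim A2 + 1" "A2 \<subseteq> B2"
    "A1 \<inter> B2 = {0}" "A2 \<inter> B1 = {0}"
proof -
  have "vec.span (A1 \<union> A2) = {x + y |x y. x \<in> A1 \<and> y \<in> A2}"
    using vec.span_Un[of A1 A2]
    by (simp only: vec.span_eq_iff[THEN iffD2, OF A1] vec.span_eq_iff[THEN iffD2, OF A2])
  then have "vec.dim (vec.span (A1 \<union> A2)) \<le> vec.dim A1 + vec.dim A2"
    using vec.dim_sums_Int[OF A1 A2] by simp
  then have "vec.dim (vec.span (A1 \<union> A2)) < vec.dim (UNIV :: ('a ^ 'd) set)"
    using assms(4) by (simp add: card_cart_basis)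
  then have "vec.span (A1 \<union> A2) \<noteq> UNIV"
    by (metis less_irrefl)
  then obtain v where v: "v \<notin> vec.span (A1 \<union> A2)" by blast
  have "v \<notin> vec.span A1" "v \<notin> vec.span A2"
    using v vec.span_mono[of A1 "A1 \<union> A2"] vec.span_mono[of A2 "A1 \<union> A2"] by auto
  then have dims: "vec.dim (vec.span (insert v A1)) = vec.dim A1 + 1"
    "vec.dim (vec.span (insert v A2)) = vec.dim A2 + 1"
    by (simp_all add: vec.dim_insert)
  have inter12: "A1 \<inter> vec.span (insert v A2) = {0}"
    using A1 A2 assms(3) v by (rule inter_span_insert_eq_0)
  have inter21: "A2 \<inter> vec.span (insert v A1) = {0}"
    using A2 A1 assms(3) v by (intro inter_span_insert_eq_0) (simp_all add: Int_commute Un_commute)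
  have sup: "A \<subseteq> vec.span (insert v A)" for A
    by (rule order_trans[OF subset_insertI vec.span_superset])
  show ?thesis
    by (rule that[OF vec.subspace_span dims(1) sup vec.subspace_span dims(2) sup inter12 inter21])
qed

lemma inter_span_singleton_eq_0:
  fixes A :: "('a::field ^ 'd) set"
  assumes "vec.subspace A" "p \<notin> A"
  shows "A \<inter> vec.span {p} = {0}"
proof
  show "{0} \<subseteq> A \<inter> vec.span {p}"
    using vec.subspace_0[OF assms(1)] vec.span_zero by blast
  show "A \<inter> vec.span {p} \<subseteq> {0}"
  proof
    fix x assume x: "x \<in> A \<inter> vec.span {p}"
    then obtain k where k: "x = k *s p"
      by (auto simp: vec.span_singleton)
    have "k = 0"
    proof (rule ccontr)
      assume "k \<noteq> 0"
      then have "p = inverse k *s x"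
        using k by simp
      then have "p \<in> A"
        using x vec.subspace_scale[OF assms(1)] by simp
      with assms(2) show False ..
    qed
    then show "x \<in> {0}"
      using k by simp
  qed
qed

lemma hyperplanes_with_trivial_cross_intersections:
  fixes B1 B2 :: "('a::field ^ 'd) set"
  assumes B1: "vec.subspace B1" and B2: "vec.subspace B2" and "vec.dim (B1 \<inter> B2) = 1"
  obtains A1 A2 where
    "vec.subspace A1" "vec.dim A1 = vec.dim B1 - 1" "A1 \<subseteq> B1"
    "vec.subspace A2" "vec.dim A2 = vec.dim B2 - 1" "A2 \<subseteq> B2"
    "A1 \<inter> B2 = {0}" "A2 \<inter> B1 = {0}"
proof -
  have "\<not> B1 \<inter> B2 \<subseteq> {0}"
    using assms(3) vec.dim_eq_0 by (metis zero_neq_one)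
  then obtain p where p: "p \<in> B1 \<inter> B2" "p \<noteq> 0" by blast
  have meet: "B1 \<inter> B2 = vec.span {p}"
  proof (rule vec.subspace_dim_equal[symmetric])
    show "vec.subspace (vec.span {p})" "vec.subspace (B1 \<inter> B2)"
      using vec.subspace_inter[OF B1 B2] by simp_all
    show "vec.span {p} \<subseteq> B1 \<inter> B2"
      using p(1) vec.subspace_inter[OF B1 B2] by (intro vec.span_minimal) simp_all
    show "vec.dim (B1 \<inter> B2) \<le> vec.dim (vec.span {p})"
      using assms(3) p(2) by (simp add: vec.dim_insert)
  qed
  obtain A1 where A1: "vec.subspace A1" "vec.dim A1 = vec.dim B1 - 1" "A1 \<subseteq> B1" "p \<notin> A1"
    using hyperplane_avoiding[OF B1] p by blast
  obtain A2 where A2: "vec.subspace A2" "vec.dim A2 = vec.dim B2 - 1" "A2 \<subseteq> B2" "p \<notin> A2"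
    using hyperplane_avoiding[OF B2] p by blast
  have "A1 \<inter> B2 = A1 \<inter> (B1 \<inter> B2)"
    using A1(3) by blast
  also have "\<dots> = {0}"
    unfolding meet using A1(1,4) by (rule inter_span_singleton_eq_0)
  finally have inter12: "A1 \<inter> B2 = {0}" .
  have "A2 \<inter> B1 = A2 \<inter> (B1 \<inter> B2)"
    using A2(3) by blast
  also have "\<dots> = {0}"
    unfolding meet using A2(1,4) by (rule inter_span_singleton_eq_0)
  finally have inter21: "A2 \<inter> B1 = {0}" .
  show ?thesis
    by (rule that[OF A1(1-3) A2(1-3) inter12 inter21])
qed

lemma red_n1spaces_meet:
  fixes F :: "(('a::{field,finite} ^ 'd) set \<times> ('a ^ 'd) set) set"
  assumes F: "coclique n F" and "CARD('d) = 2 * n + 1" "0 < n"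
    and red1: "red_n1space n F A1" and red2: "red_n1space n F A2"
  shows "A1 \<inter> A2 \<noteq> {0}"
proof
  assume disjoint: "A1 \<inter> A2 = {0}"
  have A1: "vec.subspace A1" "vec.dim A1 = n" and A2: "vec.subspace A2" "vec.dim A2 = n"
    using red1 red2 \<open>0 < n\<close> unfolding red_n1space_def proj_space_def by auto
  have "vec.dim A1 + vec.dim A2 < CARD('d)"
    using A1(2) A2(2) assms(2) by simp
  then obtain B1 B2 where
    B1: "vec.subspace B1" "vec.dim B1 = vec.dim A1 + 1" "A1 \<subseteq> B1" and
    B2: "vec.subspace B2" "vec.dim B2 = vec.dim A2 + 1" "A2 \<subseteq> B2" and
    cross: "A1 \<inter> B2 = {0}" "A2 \<inter> B1 = {0}"
    by (rule extensions_with_trivial_cross_intersections[OF A1(1) A2(1) disjoint])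
  have "F \<subseteq> flags n"
    using F unfolding coclique_def by simp
  then have "(A1, B1) \<in> F" "(A2, B2) \<in> F"
    using assms(2,3) red1 red2 B1 B2 A1(2) A2(2)
    by (simp_all add: flag_in_if_red_n1space proj_space_def)
  moreover have "opposite (A1, B1) (A2, B2)"
    using cross unfolding opposite_def by simp
  ultimately show False
    using F unfolding coclique_def by blast
qed

lemma red_nspaces_not_in_general_position:
  fixes F :: "(('a::{field,finite} ^ 'd) set \<times> ('a ^ 'd) set) set"
  assumes F: "coclique n F" and "0 < n"
    and red1: "red_nspace n F B1" and red2: "red_nspace n F B2"
  shows "vec.dim (B1 \<inter> B2) \<noteq> 1"
proof
  assume point: "vec.dim (B1 \<inter> B2) = 1"
  have B1: "vec.subspace B1" "vec.dim B1 = n + 1" and B2: "vec.subspace B2" "vec.dim B2 = n + 1"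
    using red1 red2 unfolding red_nspace_def proj_space_def by auto
  obtain A1 A2 where
    A1: "vec.subspace A1" "vec.dim A1 = vec.dim B1 - 1" "A1 \<subseteq> B1" and
    A2: "vec.subspace A2" "vec.dim A2 = vec.dim B2 - 1" "A2 \<subseteq> B2" and
    cross: "A1 \<inter> B2 = {0}" "A2 \<inter> B1 = {0}"
    by (rule hyperplanes_with_trivial_cross_intersections[OF B1(1) B2(1) point])
  have "F \<subseteq> flags n"
    using F unfolding coclique_def by simp
  then have "(A1, B1) \<in> F" "(A2, B2) \<in> F"
    using \<open>0 < n\<close> red1 red2 A1 A2 B1(2) B2(2)
    by (simp_all add: flag_in_if_red_nspace proj_space_def)
  moreover have "opposite (A1, B1) (A2, B2)"
    using cross unfolding opposite_def by simp
  ultimately show False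
    using F unfolding coclique_def by blast
qed

theorem mainTheorem5:
  fixes F :: "(('a::{field,finite} ^ 'd) set \<times> ('a ^ 'd) set) set"
    and n :: nat
  assumes "n \<ge> 2"
    and "CARD('d) = 2 * n + 1"
    and "maximal_coclique n F"
  shows "(\<forall>A1 A2. red_n1space n F A1 \<and> red_n1space n F A2 \<longrightarrow> A1 \<inter> A2 \<noteq> {0})
       \<and> (\<forall>B1 B2. red_nspace n F B1 \<and> red_nspace n F B2 \<longrightarrow> vec.dim (B1 \<inter> B2) \<noteq> 1)"
proof -
  have F: "coclique n F" and "0 < n"
    using assms(1,3) unfolding maximal_coclique_def by simp_all
  show ?thesis
  proof (intro conjI allI impI; elim conjE)
    fix A1 A2 assume "red_n1space n F A1" "red_n1space n F A2"
    then show "A1 \<inter> A2 \<noteq> {0}"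
      by (rule red_n1spaces_meet[OF F assms(2) \<open>0 < n\<close>])
  next
    fix B1 B2 assume "red_nspace n F B1" "red_nspace n F B2"
    then show "vec.dim (B1 \<inter> B2) \<noteq> 1"
      by (rule red_nspaces_not_in_general_position[OF F \<open>0 < n\<close>])
  qed
qed

end
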